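(* Let $Q\in\mathbb{R}^{n\times n}$ be symmetric nonsingular with eigenvalues $\lambda_1\ge\dots\ge\lambda_{n-1}>0>\lambda_n$ and orthonormal eigenvectors $u_1,\dots,u_n$ ($Qu_i=\lambda_iu_i$), let $\mathcal{C_L}=\{x: x^TQx\le0,\ x^TQu_n\le0\}$, and let $A\in\mathbb{R}^{n\times n}$. Then $\mathcal{C_L}$ (equivalently, $-\mathcal{C_L}$) is an invariant set for the continuous system $\dot x(t)=Ax(t)$ (i.e., $e^{At}\mathcal{C_L}\subseteq\mathcal{C_L}$ for all $t\ge0$) if and only if there exists $\eta\in\mathbb{R}$ such that $A^TQ+QA-\eta Q\preceq0$.
   Context: $\preceq0$ denotes negative semidefiniteness. *)

theory Defs
  imports "HOL-Analysis.Analysis"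
begin

text \<open>Matrix power with respect to the matrix product (not the componentwise product).\<close>
fun mat_pow :: "real^'n^'n \<Rightarrow> nat \<Rightarrow> real^'n^'n" where
  "mat_pow A 0 = mat 1"
| "mat_pow A (Suc k) = A ** mat_pow A k"

definition mat_exp :: "real^'n^'n \<Rightarrow> real^'n^'n" where
  "mat_exp M = (\<Sum>k. (1 / fact k) *\<^sub>R mat_pow M k)"

definition neg_semidef :: "real^'n^'n \<Rightarrow> bool" where
  "neg_semidef M \<longleftrightarrow> transpose M = M \<and> (\<forall>x. x \<bullet> (M *v x) \<le> 0)"

definition lorentz_cone :: "real^'n^'n \<Rightarrow> real^'n \<Rightarrow> (real^'n) set" where
  "lorentz_cone Q un = {x. x \<bullet> (Q *v x) \<le> 0 \<and> x \<bullet> (Q *v un) \<le> 0}"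

end

theory Submission
  imports Defs
begin

text \<open>
  Write \<open>M = A'Q + QA\<close>; along a trajectory \<open>x(t) = exp(tA) x\<close> we have
  \<open>(x'Qx)' = x'Mx\<close>.

  Then an
  S-lemma (Finsler) argument for an indefinite \<open>Q\<close>: if \<open>M \<le> 0\<close> on the null cone
  \<open>x'Qx = 0\<close>, a multiplier \<open>\<eta>\<close> exists, obtained as a supremum of Rayleigh-type
  ratios \<open>x'Mx / x'Qx\<close>.  Finally, in the locale \<open>lorentz_frame\<close> of an
  eigenbasis with one negative eigenvalue, invariance yields \<open>M \<le> 0\<close> on the null
  cone (a derivative at \<open>t = 0\<close>), and conversely the Gronwall estimate keeps
  \<open>x'Qx \<le> 0\<close> while the apex of the cone prevents the trajectory from changing
  half-cone.
\<close>

abbreviation flow :: "real^'n^'n \<Rightarrow> real \<Rightarrow> real^'n \<Rightarrow> real^'n" where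
  "flow A t x \<equiv> mat_exp (t *\<^sub>R A) *v x"

abbreviation qform :: "real^'n^'n \<Rightarrow> real^'n \<Rightarrow> real" where
  "qform Q x \<equiv> x \<bullet> (Q *v x)"

abbreviation lyap :: "real^'n^'n \<Rightarrow> real^'n^'n \<Rightarrow> real^'n^'n" where
  "lyap A Q \<equiv> transpose A ** Q + Q ** A"

lemma mat_pow_scaleR: "mat_pow (t *\<^sub>R A) k = (t ^ k) *\<^sub>R mat_pow A k"
  by (induction k) (simp_all add: matrix_scalar_ac scalar_matrix_assoc[symmetric])

text \<open>The operator norm is submultiplicative, so \<open>\<parallel>A\<^sup>k\<parallel>\<^sub>o\<^sub>p \<le> \<parallel>A\<parallel>\<^sub>o\<^sub>p\<^sup>k\<close>.\<close>
lemma onorm_mat_pow: "onorm ((*v) (mat_pow A k)) \<le> onorm ((*v) A) ^ k"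
proof (induction k)
  case 0
  then show ?case by (simp add: onorm_id)
next
  case (Suc k)
  have "(*v) (mat_pow A (Suc k)) = (*v) A \<circ> (*v) (mat_pow A k)"
    by (simp add: fun_eq_iff matrix_vector_mul_assoc)
  then have "onorm ((*v) (mat_pow A (Suc k))) \<le> onorm ((*v) A) * onorm ((*v) (mat_pow A k))"
    by (simp add: onorm_compose matrix_vector_mul_bounded_linear)
  also have "\<dots> \<le> onorm ((*v) A) * onorm ((*v) A) ^ k"
    by (rule mult_left_mono[OF Suc onorm_pos_le[OF matrix_vector_mul_bounded_linear]])
  finally show ?case by simp
qed

lemma norm_matrix_le_onorm:
  fixes M :: "real^'n^'m"
  shows "norm M \<le> real CARD('m) * real CARD('n) * onorm ((*v) M)"
proof -
  have row: "norm (M $ i) \<le> real CARD('n) * onorm ((*v) M)" for i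
  proof -
    have "norm (M $ i) \<le> (\<Sum>j\<in>UNIV. \<bar>M $ i $ j\<bar>)" by (rule norm_le_l1_cart)
    also have "\<dots> \<le> (\<Sum>j\<in>(UNIV::'n set). onorm ((*v) M))"
      by (rule sum_mono) (rule matrix_component_le_onorm)
    finally show ?thesis by simp
  qed
  have "norm M \<le> (\<Sum>i\<in>UNIV. norm (M $ i))"
    unfolding norm_vec_def by (rule L2_set_le_sum) simp
  also have "\<dots> \<le> (\<Sum>i\<in>(UNIV::'m set). real CARD('n) * onorm ((*v) M))"
    by (rule sum_mono) (rule row)
  finally show ?thesis by simp
qed

text \<open>The exponential series converges absolutely, by comparison with \<open>exp \<parallel>A\<parallel>\<^sub>o\<^sub>p\<close>.\<close>
lemma summable_mat_exp: "summable (\<lambda>k. (1 / fact k) *\<^sub>R mat_pow (A::real^'n^'n) k)"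
proof (rule summable_comparison_test')
  define C where "C = real CARD('n) * real CARD('n)"
  define K where "K = onorm ((*v) A)"
  show "summable (\<lambda>k. C * (inverse (fact k) * K ^ k))"
    by (intro summable_mult summable_exp)
  fix k :: nat
  have "norm (mat_pow A k) \<le> C * onorm ((*v) (mat_pow A k))"
    unfolding C_def by (rule norm_matrix_le_onorm)
  also have "\<dots> \<le> C * K ^ k"
    unfolding K_def by (rule mult_left_mono[OF onorm_mat_pow]) (simp add: C_def)
  finally have "norm (mat_pow A k) \<le> C * K ^ k" .
  then have "inverse (fact k) * norm (mat_pow A k) \<le> inverse (fact k) * (C * K ^ k)"
    by (rule mult_left_mono) simp
  then show "norm ((1 / fact k) *\<^sub>R mat_pow A k) \<le> C * (inverse (fact k) * K ^ k)"
    by (simp add: field_simps)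
qed

lemma matrix_inner_transpose: "((A::real^'n^'m) *v y) \<bullet> w = y \<bullet> (transpose A *v w)"
  by (metis dot_lmul_matrix inner_commute transpose_matrix_vector)

lemma flow_inner_sums:
  fixes A :: "real^'n^'n"
  shows "(\<lambda>k. ((mat_pow A k *v x) \<bullet> w / fact k) * t ^ k) sums (flow A t x \<bullet> w)"
proof -
  have lin: "bounded_linear (\<lambda>M::real^'n^'n. (M *v x) \<bullet> w)"
    unfolding linear_conv_bounded_linear[symmetric]
    by (rule linearI) (simp_all add: matrix_vector_mult_add_rdistrib inner_add_left
        scaleR_matrix_vector_assoc[symmetric])
  have "(\<lambda>k. (((1 / fact k) *\<^sub>R mat_pow (t *\<^sub>R A) k) *v x) \<bullet> w) sums (flow A t x \<bullet> w)"
    unfolding mat_exp_def by (rule bounded_linear.sums[OF lin summable_sums[OF summable_mat_exp]])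
  then show ?thesis
    by (simp add: mat_pow_scaleR scaleR_matrix_vector_assoc[symmetric] mult.commute)
qed

text \<open>Termwise differentiation of that power series: \<open>(exp(tA) x \<bullet> w)' = A exp(tA) x \<bullet> w\<close>.\<close>
lemma flow_inner_deriv:
  fixes A :: "real^'n^'n"
  shows "((\<lambda>t. flow A t x \<bullet> w) has_real_derivative (A *v flow A t x) \<bullet> w) (at t)"
proof -
  define c where "c k = (mat_pow A k *v x) \<bullet> w / fact k" for k
  have f: "(\<lambda>t. flow A t x \<bullet> w) = (\<lambda>t. \<Sum>k. c k * t ^ k)"
    using flow_inner_sums[of A x w] unfolding c_def by (auto simp: sums_iff)
  have conv: "summable (\<lambda>k. c k * y ^ k)" for y
    using flow_inner_sums[of A x w y] unfolding c_def by (auto simp: sums_iff)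
  have "diffs c k = (mat_pow A k *v x) \<bullet> (transpose A *v w) / fact k" for k
  proof -
    have "diffs c k = (mat_pow A (Suc k) *v x) \<bullet> w / fact k"
      by (simp add: diffs_def c_def fact_Suc del: of_nat_Suc)
    also have "(mat_pow A (Suc k) *v x) \<bullet> w = (mat_pow A k *v x) \<bullet> (transpose A *v w)"
      by (simp add: matrix_vector_mul_assoc[symmetric] matrix_inner_transpose)
    finally show ?thesis .
  qed
  then have "(\<Sum>k. diffs c k * t ^ k) = flow A t x \<bullet> (transpose A *v w)"
    using flow_inner_sums[of A x "transpose A *v w" t] by (simp add: sums_iff)
  also have "\<dots> = (A *v flow A t x) \<bullet> w"
    by (simp add: matrix_inner_transpose)
  finally have "(\<Sum>k. diffs c k * t ^ k) = (A *v flow A t x) \<bullet> w" .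
  then show ?thesis
    unfolding f by (metis termdiffs_strong_converges_everywhere[OF conv])
qed

lemma flow_has_vector_derivative:
  fixes A :: "real^'n^'n"
  shows "((\<lambda>t. flow A t x) has_vector_derivative A *v flow A t x) (at t)"
  unfolding has_vector_derivative_def
proof (subst has_derivative_componentwise_within, intro ballI)
  fix i :: "real^'n"
  have "(\<lambda>h. (h *\<^sub>R (A *v flow A t x)) \<bullet> i) = (*) ((A *v flow A t x) \<bullet> i)"
    by (auto simp: fun_eq_iff)
  then show "((\<lambda>t. flow A t x \<bullet> i) has_derivative (\<lambda>h. (h *\<^sub>R (A *v flow A t x)) \<bullet> i)) (at t)"
    using flow_inner_deriv[of A x i t] by (simp add: has_field_derivative_def)
qed

lemma mat_exp_zero_apply [simp]: "mat_exp 0 *v x = (x::real^'n)"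
proof -
  have "(mat_exp 0 *v x) \<bullet> w = x \<bullet> w" for w
  proof -
    define c where "c k = (mat_pow (0::real^'n^'n) k *v x) \<bullet> w / fact k" for k
    have "(\<lambda>k. c k * 0 ^ k) sums ((mat_exp 0 *v x) \<bullet> w)"
      using flow_inner_sums[of "0::real^'n^'n" x w 0] unfolding c_def scaleR_zero_left .
    then have "(mat_exp 0 *v x) \<bullet> w = (\<Sum>k. c k * 0 ^ k)"
      by (rule sums_unique)
    also have "\<dots> = c 0" by (rule powser_zero)
    finally show ?thesis by (simp add: c_def)
  qed
  then show ?thesis using vector_eq_rdot by blast
qed

lemma qform_flow_deriv:
  fixes A B :: "real^'n^'n"
  shows "((\<lambda>s. qform B (flow A s x)) has_real_derivative qform (lyap A B) (flow A t x)) (at t)"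
proof -
  let ?v = "flow A t x"
  have "((\<lambda>s. qform B (flow A s x)) has_real_derivative
          ?v \<bullet> (B *v (A *v ?v)) + (A *v ?v) \<bullet> (B *v ?v)) (at t)"
    unfolding has_real_derivative_iff_has_vector_derivative
    by (rule bounded_bilinear.has_vector_derivative[OF bounded_bilinear_inner
          flow_has_vector_derivative
          bounded_linear.has_vector_derivative[OF matrix_vector_mul_bounded_linear
            flow_has_vector_derivative]])
  also have "?v \<bullet> (B *v (A *v ?v)) + (A *v ?v) \<bullet> (B *v ?v) = qform (lyap A B) ?v"
    by (simp add: matrix_vector_mult_add_rdistrib inner_add_right
        matrix_vector_mul_assoc[symmetric] matrix_inner_transpose)
  finally show ?thesis .
qed

lemma qform_flow_decay:
  fixes A B :: "real^'n^'n"
  assumes bound: "\<And>y. qform (lyap A B) y \<le> c * qform B y" and "s \<le> t"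
  shows "exp (- c * t) * qform B (flow A t x) \<le> exp (- c * s) * qform B (flow A s x)"
proof -
  define h where "h r = exp (- c * r) * qform B (flow A r x)" for r
  have deriv: "(h has_real_derivative
      exp (- c * r) * (qform (lyap A B) (flow A r x) - c * qform B (flow A r x))) (at r)" for r
  proof -
    have "((\<lambda>r. exp (- c * r)) has_real_derivative exp (- c * r) * (- c)) (at r)"
      using DERIV_fun_exp[OF DERIV_cmult_Id[of "- c" r UNIV]] by simp
    from DERIV_mult[OF this qform_flow_deriv[of A x B r]] show ?thesis
      unfolding h_def by (simp add: algebra_simps)
  qed
  have "h t \<le> h s"
  proof (rule DERIV_nonpos_imp_nonincreasing[OF \<open>s \<le> t\<close>])
    fix r
    show "\<exists>d. (h has_real_derivative d) (at r) \<and> d \<le> 0"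
      using deriv[of r] bound[of "flow A r x"] by (intro exI conjI) (auto intro: mult_nonneg_nonpos)
  qed
  then show ?thesis unfolding h_def .
qed

text \<open>
  A trajectory that reaches the origin stays there (forward uniqueness); this is
  the decay estimate for \<open>B = I\<close> and \<open>c = 2\<parallel>A\<parallel>\<^sub>o\<^sub>p\<close>.
\<close>
lemma flow_stays_zero:
  fixes A :: "real^'n^'n"
  assumes zero: "flow A s x = 0" and "s \<le> t"
  shows "flow A t x = 0"
proof -
  define K where "K = onorm ((*v) A)"
  have bound: "qform (lyap A (mat 1)) y \<le> (2 * K) * qform (mat 1) y" for y
  proof -
    have "y \<bullet> (A *v y) \<le> norm y * norm (A *v y)" by (rule norm_cauchy_schwarz)
    also have "\<dots> \<le> norm y * (K * norm y)"
      unfolding K_def by (rule mult_left_mono[OF onorm[OF matrix_vector_mul_bounded_linear]]) simp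
    finally have "y \<bullet> (A *v y) \<le> K * (y \<bullet> y)"
      by (simp add: power2_norm_eq_inner[symmetric] power2_eq_square algebra_simps)
    moreover have "qform (lyap A (mat 1)) y = 2 * (y \<bullet> (A *v y))"
      by (simp add: matrix_vector_mult_add_rdistrib inner_add_right dot_lmul_matrix
          inner_commute[of y "y v* A"])
    ultimately show ?thesis by simp
  qed
  have "exp (- (2 * K) * t) * (flow A t x \<bullet> flow A t x) \<le> 0"
    using qform_flow_decay[OF bound \<open>s \<le> t\<close>, of x] zero by simp
  then have "flow A t x \<bullet> flow A t x \<le> 0" by (simp add: mult_le_0_iff)
  then show ?thesis using inner_gt_zero_iff not_le by blast
qed

lemma qform_boundary_lyap_nonpos:
  fixes A Q :: "real^'n^'n"
  assumes stays: "\<And>t. t \<ge> 0 \<Longrightarrow> qform Q (flow A t w) \<le> 0" and null: "qform Q w = 0"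
  shows "qform (lyap A Q) w \<le> 0"
proof (rule ccontr)
  assume "\<not> ?thesis"
  then have pos: "qform (lyap A Q) w > 0" by simp
  have "((\<lambda>t. qform Q (flow A t w)) has_real_derivative qform (lyap A Q) w) (at 0)"
    using qform_flow_deriv[of A w Q 0] by simp
  from DERIV_pos_inc_right[OF this pos] obtain d where "d > 0"
    and increasing: "\<And>h. 0 < h \<Longrightarrow> h < d \<Longrightarrow> qform Q (flow A 0 w) < qform Q (flow A (0 + h) w)"
    by blast
  then have "0 < qform Q (flow A (d / 2) w)"
    using increasing[of "d / 2"] null by simp
  with stays[of "d / 2"] \<open>d > 0\<close> show False by simp
qed

text \<open>
  Then \<open>r\<close> is positive at some root of \<open>q\<close>: the roots satisfy
  \<open>t1 < 0 < t2\<close>, and \<open>t2 r(t1) - t1 r(t2) = (t2 - t1)(r0 - r2 t1 t2) > 0\<close>.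
\<close>
lemma quadratic_roots_separate:
  fixes q0 q1 q2 r0 r1 r2 :: real
  assumes "q0 > 0" "q2 < 0" "r0 > 0" "r2 > 0"
  shows "\<exists>t. q0 + q1 * t + q2 * t^2 = 0 \<and> r0 + r1 * t + r2 * t^2 > 0"
proof (rule ccontr)
  assume "\<not> ?thesis"
  then have below: "r0 + r1 * t + r2 * t^2 \<le> 0" if "q0 + q1 * t + q2 * t^2 = 0" for t
    using that by (meson not_le)
  define s where "s = sqrt (q1^2 - 4 * q0 * q2)"
  have disc: "q1^2 - 4 * q0 * q2 > q1^2"
    using assms(1,2) by (simp add: mult_pos_neg)
  then have "q1^2 - 4 * q0 * q2 \<ge> 0"
    using zero_le_power2[of q1] by linarith
  then have s2: "s^2 = q1^2 - 4 * q0 * q2"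
    unfolding s_def by simp
  have "s > \<bar>q1\<bar>"
    unfolding s_def using disc by (metis abs_ge_zero real_sqrt_abs real_sqrt_less_mono)
  define t1 where "t1 = (- q1 + s) / (2 * q2)"
  define t2 where "t2 = (- q1 - s) / (2 * q2)"
  have "t1 < 0" "t2 > 0"
    unfolding t1_def t2_def using \<open>s > \<bar>q1\<bar>\<close> assms(2)
    by (auto simp: divide_pos_neg divide_neg_neg)
  have "q0 + q1 * t1 + q2 * t1^2 = 0" "q0 + q1 * t2 + q2 * t2^2 = 0"
    unfolding t1_def t2_def using assms(2) s2
    by (simp_all add: field_simps power2_eq_square) algebra+
  then have a: "r0 + r1 * t1 + r2 * t1^2 \<le> 0" and b: "r0 + r1 * t2 + r2 * t2^2 \<le> 0"
    by (simp_all add: below)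
  have "t2 * (r0 + r1 * t1 + r2 * t1^2) - t1 * (r0 + r1 * t2 + r2 * t2^2)
        = (t2 - t1) * (r0 - r2 * t1 * t2)"
    by (simp add: algebra_simps power2_eq_square)
  moreover have "t2 * (r0 + r1 * t1 + r2 * t1^2) \<le> 0"
    using a \<open>t2 > 0\<close> by (simp add: mult_nonneg_nonpos)
  moreover have "- t1 * (r0 + r1 * t2 + r2 * t2^2) \<le> 0"
    using b \<open>t1 < 0\<close> by (simp add: mult_nonpos_nonpos)
  moreover have "r2 * t1 * t2 < 0"
    using \<open>t1 < 0\<close> \<open>t2 > 0\<close> assms(4) by (simp add: mult_pos_neg mult_neg_pos)
  then have "(t2 - t1) * (r0 - r2 * t1 * t2) > 0"
    using \<open>t1 < 0\<close> \<open>t2 > 0\<close> assms(3) by simp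
  ultimately show False by linarith
qed

lemma qform_line:
  fixes Q :: "real^'n^'n"
  shows "qform Q (x + t *\<^sub>R y) = qform Q x + (x \<bullet> (Q *v y) + y \<bullet> (Q *v x)) * t + qform Q y * t^2"
  by (simp add: matrix_vector_right_distrib matrix_vector_mult_scaleR inner_add_left
      inner_add_right algebra_simps power2_eq_square)

text \<open>
  If \<open>M \<le> 0\<close> on the null cone of \<open>Q\<close>, every ratio \<open>x'Mx / x'Qx\<close> at a point with
  \<open>x'Qx > 0\<close> lies below every such ratio at a point with \<open>y'Qy < 0\<close>: otherwise some
  \<open>M - gQ\<close> would be positive at \<open>x\<close> and \<open>y\<close>, hence at a null vector on the line
  through them.
\<close>
lemma null_cone_ratio_le:
  fixes Q M :: "real^'n^'n"
  assumes null: "\<And>z. qform Q z = 0 \<Longrightarrow> qform M z \<le> 0"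
    and x: "qform Q x > 0" and y: "qform Q y < 0"
  shows "qform M x / qform Q x \<le> qform M y / qform Q y"
proof (rule ccontr)
  assume "\<not> ?thesis"
  then obtain g where g: "qform M y / qform Q y < g" "g < qform M x / qform Q x"
    using dense[of "qform M y / qform Q y" "qform M x / qform Q x"] by auto
  define N where "N = M - g *\<^sub>R Q"
  have qN: "qform N z = qform M z - g * qform Q z" for z
    unfolding N_def by (simp add: matrix_vector_mult_diff_rdistrib
        scaleR_matrix_vector_assoc[symmetric] inner_diff_right)
  have "qform N x > 0" "qform N y > 0"
    using g x y by (simp_all add: qN field_simps)
  then obtain t where "qform Q x + (x \<bullet> (Q *v y) + y \<bullet> (Q *v x)) * t + qform Q y * t^2 = 0"
      and "qform N x + (x \<bullet> (N *v y) + y \<bullet> (N *v x)) * t + qform N y * t^2 > 0"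
    using quadratic_roots_separate[OF x y] by blast
  then have t: "qform Q (x + t *\<^sub>R y) = 0" "qform N (x + t *\<^sub>R y) > 0"
    by (simp_all only: qform_line)
  then show False
    using null[OF t(1)] by (simp add: qN)
qed

text \<open>Finsler's lemma: the supremum of the positive-side ratios is a valid multiplier.\<close>
lemma finsler_indefinite:
  fixes Q M :: "real^'n^'n"
  assumes null: "\<And>z. qform Q z = 0 \<Longrightarrow> qform M z \<le> 0"
    and pos: "qform Q xp > 0" and neg: "qform Q yn < 0"
  shows "\<exists>\<eta>. \<forall>x. qform M x \<le> \<eta> * qform Q x"
proof -
  define S where "S = {qform M x / qform Q x | x. qform Q x > 0}"
  have below: "s \<le> qform M y / qform Q y" if "s \<in> S" "qform Q y < 0" for s y
    using that null_cone_ratio_le[OF null] unfolding S_def by auto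
  have "S \<noteq> {}" using pos unfolding S_def by blast
  have "bdd_above S" using below neg by (intro bdd_aboveI) blast
  have "qform M x \<le> Sup S * qform Q x" for x
  proof (cases "qform Q x" "0::real" rule: linorder_cases)
    case less
    then have "Sup S \<le> qform M x / qform Q x"
      by (intro cSup_least[OF \<open>S \<noteq> {}\<close>] below)
    then show ?thesis using less by (simp add: le_divide_eq)
  next
    case equal
    then show ?thesis using null[of x] by simp
  next
    case greater
    then have "qform M x / qform Q x \<le> Sup S"
      by (intro cSup_upper[OF _ \<open>bdd_above S\<close>]) (auto simp: S_def)
    then show ?thesis using greater by (simp add: divide_le_eq)
  qed
  then show ?thesis by blast
qed

text \<open>The degenerate one-dimensional case, where all ratios coincide.\<close>
lemma finsler_one_dim:
  fixes Q M :: "real^'n^'n"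
  assumes line: "\<And>x. \<exists>c. x = c *\<^sub>R v" and nz: "qform Q v \<noteq> 0"
  shows "\<exists>\<eta>. \<forall>x. qform M x \<le> \<eta> * qform Q x"
proof -
  have hom: "qform B (c *\<^sub>R v) = c^2 * qform B v" for B :: "real^'n^'n" and c
    by (simp add: matrix_vector_mult_scaleR power2_eq_square)
  have "qform M x = (qform M v / qform Q v) * qform Q x" for x
  proof -
    obtain c where "x = c *\<^sub>R v" using line by blast
    then show ?thesis using nz by (simp only: hom) simp
  qed
  then show ?thesis by (metis order_refl)
qed

lemma neg_semidef_lyap_shift_iff:
  fixes A Q :: "real^'n^'n"
  assumes "transpose Q = Q"
  shows "neg_semidef (lyap A Q - \<eta> *\<^sub>R Q) \<longleftrightarrow> (\<forall>x. qform (lyap A Q) x \<le> \<eta> * qform Q x)"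
proof -
  have "transpose (lyap A Q - \<eta> *\<^sub>R Q) = lyap A Q - \<eta> *\<^sub>R Q"
    using assms by (simp add: transpose_def vec_eq_iff matrix_matrix_mult_def mult.commute)
  moreover have "qform (lyap A Q - \<eta> *\<^sub>R Q) x = qform (lyap A Q) x - \<eta> * qform Q x" for x
    by (simp add: matrix_vector_mult_diff_rdistrib scaleR_matrix_vector_assoc[symmetric]
        inner_diff_right)
  ultimately show ?thesis unfolding neg_semidef_def by simp
qed

lemma orthonormal_expansion:
  fixes u :: "'n::finite \<Rightarrow> real^'n"
  assumes orthonormal: "\<And>i j. u i \<bullet> u j = (if i = j then 1 else 0)"
  shows "x = (\<Sum>i\<in>UNIV. (x \<bullet> u i) *\<^sub>R u i)"
proof -
  have "inj u"
    by (rule injI) (metis orthonormal zero_neq_one)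
  have "pairwise orthogonal (range u)"
    using orthonormal by (auto simp: pairwise_def orthogonal_def)
  moreover have "0 \<notin> range u"
    using orthonormal by (metis image_iff inner_zero_left zero_neq_one)
  ultimately have "independent (range u)" by (rule pairwise_orthogonal_independent)
  moreover have "card (range u) = CARD('n)" using \<open>inj u\<close> by (simp add: card_image)
  ultimately have spans: "UNIV \<subseteq> span (range u)"
    by (intro card_ge_dim_independent) simp_all
  define y where "y = x - (\<Sum>i\<in>UNIV. (x \<bullet> u i) *\<^sub>R u i)"
  have "y \<bullet> u j = 0" for j
  proof -
    have "(\<Sum>i\<in>UNIV. (x \<bullet> u i) *\<^sub>R u i) \<bullet> u j = (\<Sum>i\<in>UNIV. if i = j then x \<bullet> u i else 0)"
      by (simp add: inner_sum_left orthonormal if_distrib cong: if_cong)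
    then show ?thesis by (simp add: y_def inner_diff_left)
  qed
  then have "orthogonal y y"
    using spans by (intro orthogonal_to_span[of y "range u"]) (auto simp: orthogonal_def)
  then show ?thesis by (simp add: y_def orthogonal_self)
qed

lemma qform_eigen_expansion:
  fixes u :: "'n::finite \<Rightarrow> real^'n" and Q :: "real^'n^'n"
  assumes orthonormal: "\<And>i j. u i \<bullet> u j = (if i = j then 1 else 0)"
    and eigen: "\<And>i. Q *v u i = lam i *\<^sub>R u i"
  shows "qform Q x = (\<Sum>i\<in>UNIV. lam i * (x \<bullet> u i)^2)"
proof -
  have "Q *v x = (\<Sum>i\<in>UNIV. (x \<bullet> u i) *\<^sub>R (lam i *\<^sub>R u i))"
    by (subst orthonormal_expansion[OF orthonormal, of x])
       (simp add: linear_sum[OF matrix_vector_mul_linear] o_def matrix_vector_mult_scaleR eigen)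
  then show ?thesis
    by (simp add: inner_sum_right power2_eq_square mult_ac)
qed

locale lorentz_frame =
  fixes Q :: "real^'n^'n" and u :: "'n \<Rightarrow> real^'n" and lam :: "'n \<Rightarrow> real" and m :: 'n
  assumes orthonormal: "\<And>i j. u i \<bullet> u j = (if i = j then 1 else 0)"
    and eigen: "\<And>i. Q *v u i = lam i *\<^sub>R u i"
    and neg: "lam m < 0"
    and pos: "\<And>i. i \<noteq> m \<Longrightarrow> lam i > 0"
begin

lemma qform_eigenvector: "qform Q (u i) = lam i"
  by (simp add: eigen orthonormal)

text \<open>Since \<open>x'Qu\<^sub>m = lam m (x \<bullet> u\<^sub>m)\<close>, the cone is the half \<open>x \<bullet> u\<^sub>m \<ge> 0\<close> of \<open>x'Qx \<le> 0\<close>.\<close>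
lemma lorentz_cone_iff: "x \<in> lorentz_cone Q (u m) \<longleftrightarrow> qform Q x \<le> 0 \<and> x \<bullet> u m \<ge> 0"
  unfolding lorentz_cone_def using neg by (auto simp: eigen mult_le_0_iff)

lemma lorentz_cone_apex:
  assumes "qform Q x \<le> 0" and "x \<bullet> u m = 0"
  shows "x = 0"
proof -
  have terms_nonneg: "0 \<le> lam i * (x \<bullet> u i)^2" for i
    using pos[of i] assms(2) by (cases "i = m") auto
  have "(\<Sum>i\<in>UNIV. lam i * (x \<bullet> u i)^2) \<le> 0"
    using assms(1) qform_eigen_expansion[OF orthonormal eigen, of x] by simp
  then have terms_zero: "lam i * (x \<bullet> u i)^2 = 0" for i
    using sum_nonneg_eq_0_iff[of UNIV "\<lambda>i. lam i * (x \<bullet> u i)^2"] terms_nonneg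
    by (simp add: antisym sum_nonneg)
  have "x \<bullet> u i = 0" for i
    using terms_zero[of i] pos[of i] assms(2) by (cases "i = m") auto
  then show ?thesis
    using orthonormal_expansion[OF orthonormal, of x] by simp
qed

text \<open>Necessity: invariance makes \<open>A'Q + QA\<close> nonpositive on the null cone of \<open>Q\<close>
  (either \<open>z\<close> or \<open>-z\<close> lies in the cone), and Finsler's lemma supplies \<open>\<eta>\<close>.\<close>
lemma invariant_imp_finsler:
  assumes invariant: "\<forall>t\<ge>0. (\<lambda>x. flow A t x) ` lorentz_cone Q (u m) \<subseteq> lorentz_cone Q (u m)"
  shows "\<exists>\<eta>. \<forall>x. qform (lyap A Q) x \<le> \<eta> * qform Q x"
proof -
  have null: "qform (lyap A Q) z \<le> 0" if "qform Q z = 0" for z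
  proof -
    obtain w where "w \<in> lorentz_cone Q (u m)" "qform Q w = 0" "qform (lyap A Q) w = qform (lyap A Q) z"
    proof (cases "z \<bullet> u m \<ge> 0")
      case True
      then show ?thesis using that[of z] \<open>qform Q z = 0\<close> by (simp add: lorentz_cone_iff)
    next
      case False
      then show ?thesis using that[of "- z"] \<open>qform Q z = 0\<close>
        by (simp add: lorentz_cone_iff linear_neg[OF matrix_vector_mul_linear])
    qed
    moreover have "qform Q (flow A t w) \<le> 0" if "t \<ge> 0" for t
    proof -
      have "flow A t w \<in> lorentz_cone Q (u m)"
        using invariant that \<open>w \<in> lorentz_cone Q (u m)\<close> by blast
      then show ?thesis by (simp add: lorentz_cone_iff)
    qed
    ultimately show ?thesis using qform_boundary_lyap_nonpos by metis
  qed
  show ?thesis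
  proof (cases "\<exists>i. i \<noteq> m")
    case True
    then obtain i where "i \<noteq> m" by blast
    then show ?thesis
      using finsler_indefinite[where xp = "u i" and yn = "u m", OF null] qform_eigenvector pos neg by simp
  next
    case False
    then have univ: "UNIV = {m}" by auto
    have "(\<Sum>i\<in>UNIV. (x \<bullet> u i) *\<^sub>R u i) = (x \<bullet> u m) *\<^sub>R u m" for x
      unfolding univ by simp
    then have "x = (x \<bullet> u m) *\<^sub>R u m" for x
      by (rule trans[OF orthonormal_expansion[OF orthonormal]])
    then have "\<exists>c. x = c *\<^sub>R u m" for x
      by blast
    moreover have "qform Q (u m) \<noteq> 0"
      using qform_eigenvector neg by simp
    ultimately show ?thesis
      by (rule finsler_one_dim)
  qed
qed

text \<open>
  Sufficiency: the decay estimate keeps \<open>x(t)'Qx(t) \<le> 0\<close>; a trajectory switching to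
  the other half would cross \<open>x \<bullet> u\<^sub>m = 0\<close>, i.e. pass through the apex, and then stay
  at the origin.
\<close>
lemma finsler_imp_invariant:
  assumes finsler: "\<And>x. qform (lyap A Q) x \<le> \<eta> * qform Q x"
  shows "\<forall>t\<ge>0. (\<lambda>x. flow A t x) ` lorentz_cone Q (u m) \<subseteq> lorentz_cone Q (u m)"
proof (intro allI impI image_subsetI)
  fix t :: real and x
  assume "t \<ge> 0" and x: "x \<in> lorentz_cone Q (u m)"
  have qform_nonpos: "qform Q (flow A s x) \<le> 0" if "s \<ge> 0" for s
  proof -
    have "exp (- \<eta> * s) * qform Q (flow A s x) \<le> exp (- \<eta> * 0) * qform Q (flow A 0 x)"
      by (rule qform_flow_decay[OF finsler that])
    also have "\<dots> \<le> 0" using x by (simp add: lorentz_cone_iff)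
    finally show ?thesis by (simp add: mult_le_0_iff)
  qed
  have axis_nonneg: "flow A t x \<bullet> u m \<ge> 0"
  proof (rule ccontr)
    assume "\<not> ?thesis"
    moreover have "flow A 0 x \<bullet> u m \<ge> 0" using x by (simp add: lorentz_cone_iff)
    moreover have "isCont (\<lambda>s. flow A s x \<bullet> u m) s" for s
      using flow_inner_deriv by (rule DERIV_isCont)
    ultimately obtain s where "0 \<le> s" "s \<le> t" "flow A s x \<bullet> u m = 0"
      using IVT2[of "\<lambda>s. flow A s x \<bullet> u m" t 0 0] \<open>t \<ge> 0\<close> by auto
    then have "flow A s x = 0"
      using lorentz_cone_apex qform_nonpos by blast
    then have "flow A t x = 0"
      using flow_stays_zero \<open>s \<le> t\<close> by blast
    with \<open>\<not> ?thesis\<close> show False by simp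
  qed
  show "flow A t x \<in> lorentz_cone Q (u m)"
    using qform_nonpos[OF \<open>t \<ge> 0\<close>] axis_nonneg by (simp add: lorentz_cone_iff)
qed

end

theorem theorem3p21:
  fixes Q A :: "real^'n^'n"
    and u :: "'n \<Rightarrow> real^'n"
    and lam :: "'n \<Rightarrow> real"
    and m :: 'n
  assumes symQ: "transpose Q = Q"
    and nonsing: "invertible Q"
    and orthonormal: "\<And>i j. u i \<bullet> u j = (if i = j then 1 else 0)"
    and eigen: "\<And>i. Q *v u i = lam i *\<^sub>R u i"
    and neg: "lam m < 0"
    and pos: "\<And>i. i \<noteq> m \<Longrightarrow> lam i > 0"
  shows "(\<forall>t\<ge>0. (\<lambda>x. mat_exp (t *\<^sub>R A) *v x) ` lorentz_cone Q (u m) \<subseteq> lorentz_cone Q (u m))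
     \<longleftrightarrow> (\<exists>\<eta>::real. neg_semidef (transpose A ** Q + Q ** A - \<eta> *\<^sub>R Q))"
proof -
  interpret lorentz_frame Q u lam m
    using orthonormal eigen neg pos by unfold_locales
  show ?thesis
    unfolding neg_semidef_lyap_shift_iff[OF symQ]
    using invariant_imp_finsler finsler_imp_invariant by blast
qed

end
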